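(* Assume that for every $k>0$ there exists a $k$-ineffable$'$ cardinal. Let $k,p>0$ and let $U$ be a function assignment for $\mathbb{N}^k$ with the ordinal completion property. Then there exist a finite $A\subseteq\mathbb{N}^k$ and $E\subseteq\mathbb{N}$ with $|E|=p$ and $E^k\subseteq A$ such that $U(A)$ has at most $\mathrm{ot}(k)$ regressive values on $E^k$.
   Context: A function assignment for $\mathbb{N}^k$ assigns to each finite $A\subseteq\mathbb{N}^k$ a function $U(A):A\to A$. For a tuple $x$, $\min(x)$, $|x|$ are least and greatest coordinates; $y$ is a regressive value of $F$ on $B$ iff $y=F(x)$ for some $x\in B$ with $|y|<\min(x)$. $\mathrm{ot}(k)$ is the number of order types of elements of $\mathbb{N}^k$ ($x,y$ same order type iff $x_i<x_j\Leftrightarrow y_i<y_j$ for all $i,j$). $\mathrm{fld}(G)$ is the set of coordinates of tuples in $G$. For $g$ with finite domain $C\subseteq Y^k$ and values in $Y^k$ ($Y$ linearly ordered) and $h$ with finite domain in $\mathbb{N}^k$ and values in $\mathbb{N}^k$, $g$ is order isomorphic to $h$ iff some order-preserving bijection from $\mathrm{fld}(\mathrm{graph}\,g)$ onto $\mathrm{fld}(\mathrm{graph}\,h)$, applied coordinatewise, maps $\mathrm{graph}\,g$ onto $\mathrm{graph}\,h$. $f$ is a completion of $U$ on $Y$ iff $f:Y^k\to Y^k$ and for every finite $B\subseteq Y^k$ there are finite $C$ with $B\subseteq C\subseteq Y^k$ and finite $A\subseteq\mathbb{N}^k$ with $f|C$ order isomorphic to $U(A)$. $U$ has the ordinal completion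 property iff it has a completion on every well-ordered set. $S_k(X)$ is the set of $k$-element subsets of $X$; $f:S_k(\lambda)\to\lambda$ is regressive iff $f(A)<\min(A)$ or $\min(A)=0$; $\lambda$ is $k$-ineffable$'$ iff it is an infinite cardinal and every regressive $f:S_k(\lambda)\to\lambda$ is constant on $S_k(A)$ for some stationary $A\subseteq\lambda$. *)

theory Defs
  imports Main
begin

definition tuples :: "'a set \<Rightarrow> nat \<Rightarrow> 'a list set" where
  "tuples X k = {x. length x = k \<and> set x \<subseteq> X}"

definition function_assignment :: "nat \<Rightarrow> (nat list set \<Rightarrow> nat list \<Rightarrow> nat list) \<Rightarrow> bool" where
  "function_assignment k U \<longleftrightarrow>
     (\<forall>A. finite A \<and> A \<subseteq> tuples UNIV k \<longrightarrow> (\<forall>x\<in>A. U A x \<in> A))"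

definition regvals :: "(nat list \<Rightarrow> nat list) \<Rightarrow> nat list set \<Rightarrow> nat list set" where
  "regvals F B = {y. \<exists>x\<in>B. y = F x \<and> Max (set y) < Min (set x)}"

(* order type of a k-tuple, represented by its strict order pattern *)
definition order_pattern :: "nat \<Rightarrow> nat list \<Rightarrow> (nat \<times> nat) set" where
  "order_pattern k x = {(i, j). i < k \<and> j < k \<and> x ! i < x ! j}"

definition ot :: "nat \<Rightarrow> nat" where
  "ot k = card (order_pattern k ` tuples (UNIV :: nat set) k)"

definition graph_on :: "'a list set \<Rightarrow> ('a list \<Rightarrow> 'a list) \<Rightarrow> ('a list \<times> 'a list) set" where
  "graph_on C g = {(x, g x) | x. x \<in> C}"

definition fld :: "('a list \<times> 'a list) set \<Rightarrow> 'a set" where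
  "fld G = (\<Union>(x, y)\<in>G. set x \<union> set y)"

definition order_iso :: "'a rel \<Rightarrow> 'a list set \<Rightarrow> ('a list \<Rightarrow> 'a list)
                          \<Rightarrow> nat list set \<Rightarrow> (nat list \<Rightarrow> nat list) \<Rightarrow> bool" where
  "order_iso r C g A h \<longleftrightarrow>
     (\<exists>\<phi>. bij_betw \<phi> (fld (graph_on C g)) (fld (graph_on A h)) \<and>
          (\<forall>a\<in>fld (graph_on C g). \<forall>b\<in>fld (graph_on C g).
              ((a, b) \<in> r \<and> a \<noteq> b) \<longleftrightarrow> \<phi> a < \<phi> b) \<and>
          (\<lambda>(x, y). (map \<phi> x, map \<phi> y)) ` graph_on C g = graph_on A h)"

definition completion :: "nat \<Rightarrow> (nat list set \<Rightarrow> nat list \<Rightarrow> nat list) \<Rightarrow> 'a set \<Rightarrow> 'a rel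
                           \<Rightarrow> ('a list \<Rightarrow> 'a list) \<Rightarrow> bool" where
  "completion k U Y r f \<longleftrightarrow>
     (\<forall>x\<in>tuples Y k. f x \<in> tuples Y k) \<and>
     (\<forall>B. finite B \<and> B \<subseteq> tuples Y k \<longrightarrow>
        (\<exists>C A. finite C \<and> B \<subseteq> C \<and> C \<subseteq> tuples Y k \<and>
               finite A \<and> A \<subseteq> tuples UNIV k \<and> order_iso r C f A (U A)))"

(* ordinal completion property, relativised to well-orders on subsets of the type 'a *)
definition ordinal_completion_property :: "'a itself \<Rightarrow> nat \<Rightarrow> (nat list set \<Rightarrow> nat list \<Rightarrow> nat list) \<Rightarrow> bool" where
  "ordinal_completion_property _ k U \<longleftrightarrow>
     (\<forall>r :: 'a rel. Well_order r \<longrightarrow> (\<exists>f. completion k U (Field r) r f))"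

definition rmin :: "'a rel \<Rightarrow> 'a set \<Rightarrow> 'a" where
  "rmin r A = (THE a. a \<in> A \<and> (\<forall>b\<in>A. (a, b) \<in> r))"

definition rless :: "'a rel \<Rightarrow> 'a \<Rightarrow> 'a \<Rightarrow> bool" where
  "rless r a b \<longleftrightarrow> (a, b) \<in> r \<and> a \<noteq> b"

definition club :: "'a rel \<Rightarrow> 'a set \<Rightarrow> bool" where
  "club r C \<longleftrightarrow> C \<subseteq> Field r \<and>
     (\<forall>\<alpha>\<in>Field r. \<exists>\<beta>\<in>C. rless r \<alpha> \<beta>) \<and>
     (\<forall>\<gamma>\<in>Field r. ((\<exists>\<beta>\<in>C. rless r \<beta> \<gamma>) \<and>
                     (\<forall>\<alpha>. rless r \<alpha> \<gamma> \<longrightarrow> (\<exists>\<beta>\<in>C. rless r \<alpha> \<beta> \<and> rless r \<beta> \<gamma>)))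
                   \<longrightarrow> \<gamma> \<in> C)"

definition stationary :: "'a rel \<Rightarrow> 'a set \<Rightarrow> bool" where
  "stationary r S \<longleftrightarrow> S \<subseteq> Field r \<and> (\<forall>C. club r C \<longrightarrow> S \<inter> C \<noteq> {})"

definition Sk :: "nat \<Rightarrow> 'a set \<Rightarrow> 'a set set" where
  "Sk k X = {A. A \<subseteq> X \<and> finite A \<and> card A = k}"

definition regressive :: "nat \<Rightarrow> 'a rel \<Rightarrow> ('a set \<Rightarrow> 'a) \<Rightarrow> bool" where
  "regressive k r f \<longleftrightarrow>
     (\<forall>A\<in>Sk k (Field r). f A \<in> Field r \<and>
        (rless r (f A) (rmin r A) \<or> rmin r A = rmin r (Field r)))"

definition ineffable' :: "nat \<Rightarrow> 'a rel \<Rightarrow> bool" where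
  "ineffable' k r \<longleftrightarrow> card_order_on (Field r) r \<and> infinite (Field r) \<and>
     (\<forall>f. regressive k r f \<longrightarrow>
        (\<exists>S. stationary r S \<and> (\<exists>c. \<forall>A\<in>Sk k S. f A = c)))"

end

theory Submission
  imports Defs "HOL-Library.Ramsey"
begin

(* Let r be a 2k-ineffable' cardinal and f a completion of U on r. For a rank vector z and a
   coordinate i, reading a k-tuple off a k-set A along z and taking the i-th coordinate of f
   there (if f lies below A) gives a regressive function of A. These finitely many functions
   are made homogeneous simultaneously: on a 2k-set, evaluate one of them that is not
   homogeneous there. By ineffability this diagonal function is constant on the 2k-sets of a
   stationary set; along an omega-sequence in it, Ramsey's theorem fixes the set of
   inhomogeneous indices, and constancy of the diagonal function then forces that set to be
   empty. Consequently the regressive values of f at tuples from the sequence depend only on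
   their order type, and an order isomorphism between a finite part of f and some U(A) carries
   the first p terms of the sequence to the required set E. *)

section \<open>Well orders and stationary sets\<close>

lemma rless_trans:
  assumes "Well_order r" "rless r a b" "rless r b c"
  shows "rless r a c"
  using assms unfolding rless_def well_order_on_def linear_order_on_def partial_order_on_def
    preorder_on_def trans_def antisym_def by blast

lemma le_rless_trans:
  assumes "Well_order r" "(a, b) \<in> r" "rless r b c"
  shows "rless r a c"
  using assms unfolding rless_def well_order_on_def linear_order_on_def partial_order_on_def
    preorder_on_def trans_def antisym_def by blast

lemma rless_asym:
  assumes "Well_order r" "rless r a b"
  shows "\<not> rless r b a"
  using assms unfolding rless_def well_order_on_def linear_order_on_def partial_order_on_def
    antisym_def by blast

lemma rless_Field: "rless r a b \<Longrightarrow> a \<in> Field r \<and> b \<in> Field r"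
  unfolding rless_def by (auto intro: FieldI1 FieldI2)

lemma rmin_eq_minim: "Well_order r \<Longrightarrow> rmin r X = wo_rel.minim r X"
  unfolding rmin_def wo_rel.minim_def[unfolded wo_rel_def] wo_rel.isMinim_def[unfolded wo_rel_def]
  by simp

lemma rmin_in: "Well_order r \<Longrightarrow> X \<subseteq> Field r \<Longrightarrow> X \<noteq> {} \<Longrightarrow> rmin r X \<in> X"
  using wo_rel.minim_in[unfolded wo_rel_def] rmin_eq_minim by metis

lemma rmin_least: "Well_order r \<Longrightarrow> X \<subseteq> Field r \<Longrightarrow> b \<in> X \<Longrightarrow> (rmin r X, b) \<in> r"
  using wo_rel.minim_least[unfolded wo_rel_def] rmin_eq_minim by metis

lemma monotone_rless_if_Suc:
  assumes "Well_order r" "\<And>n. rless r (s n) (s (Suc n))"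
  shows "monotone (<) (rless r) s"
proof (rule monotoneI)
  fix i j :: nat
  assume "i < j"
  then show "rless r (s i) (s j)"
  proof (induction j)
    case (Suc j)
    then show ?case
      using assms rless_trans[OF assms(1)] by (cases "i = j") auto
  qed simp
qed

lemma monotone_rless_iff:
  fixes s :: "nat \<Rightarrow> 'a"
  assumes "Well_order r" "monotone (<) (rless r) s"
  shows "rless r (s i) (s j) \<longleftrightarrow> i < j"
proof
  assume less: "rless r (s i) (s j)"
  show "i < j"
  proof (rule ccontr)
    assume "\<not> i < j"
    then consider "i = j" | "j < i" by linarith
    then show False
    proof cases
      case 2
      then show False using less rless_asym[OF assms(1)] monotoneD[OF assms(2)] by blast
    qed (use less in \<open>simp add: rless_def\<close>)
  qed
qed (rule monotoneD[OF assms(2)])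

lemma monotone_rless_inj:
  fixes s :: "nat \<Rightarrow> 'a"
  assumes "Well_order r" "monotone (<) (rless r) s"
  shows "inj s"
  by (rule injI) (metis assms monotone_rless_iff linorder_neqE_nat rless_def)

lemma monotone_rless_Field:
  fixes s :: "nat \<Rightarrow> 'a"
  assumes "monotone (<) (rless r) s"
  shows "s i \<in> Field r"
  using rless_Field[OF monotoneD[OF assms lessI]] by blast

lemma tail_club:
  assumes co: "card_order_on (Field r) r" and inf: "infinite (Field r)" and a: "a \<in> Field r"
  shows "club r {x \<in> Field r. rless r a x}"
proof -
  have wo: "Well_order r" using co by (simp add: card_order_on_well_order_on)
  have total: "(b, c) \<in> r \<or> (c, b) \<in> r" if "b \<in> Field r" "c \<in> Field r" for b c
    using wo that unfolding well_order_on_def linear_order_on_def total_on_def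
      partial_order_on_def preorder_on_def refl_on_def by metis
  have refl: "(b, b) \<in> r" if "b \<in> Field r" for b
    using wo that unfolding well_order_on_def linear_order_on_def
      partial_order_on_def preorder_on_def refl_on_def by blast
  have unbounded: "\<exists>b\<in>Field r. rless r c b" if "c \<in> Field r" for c
    using infinite_Card_order_limit[OF co inf that] unfolding rless_def by blast
  have "\<exists>\<beta>\<in>{x \<in> Field r. rless r a x}. rless r \<alpha> \<beta>" if \<alpha>: "\<alpha> \<in> Field r" for \<alpha>
  proof -
    obtain c where c: "c \<in> Field r" "(a, c) \<in> r" "(\<alpha>, c) \<in> r"
      using total[OF a \<alpha>] refl[OF a] refl[OF \<alpha>] a \<alpha> by blast
    obtain b where "b \<in> Field r" "rless r c b" using unbounded[OF c(1)] by blast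
    then show ?thesis using c le_rless_trans[OF wo] by blast
  qed
  then show ?thesis
    unfolding club_def using rless_trans[OF wo] by blast
qed

lemma stationary_unbounded:
  assumes "card_order_on (Field r) r" "infinite (Field r)" "stationary r S" "a \<in> Field r"
  shows "\<exists>t\<in>S. rless r a t"
  using assms tail_club[OF assms(1,2,4)] unfolding stationary_def by blast

lemma stationary_obtain_monotone_seq:
  assumes co: "card_order_on (Field r) r" and inf: "infinite (Field r)" and st: "stationary r S"
  obtains s :: "nat \<Rightarrow> 'a" where "monotone (<) (rless r) s" "range s \<subseteq> S"
proof -
  have wo: "Well_order r" using co by (simp add: card_order_on_well_order_on)
  have SF: "S \<subseteq> Field r" using st unfolding stationary_def by blast
  obtain a where "a \<in> Field r" using inf by fastforce
  then have "\<exists>t. t \<in> S" using stationary_unbounded[OF co inf st] by blast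
  moreover have "\<exists>t. t \<in> S \<and> rless r x t" if "x \<in> S" for x
    using stationary_unbounded[OF co inf st] that SF by blast
  ultimately obtain s where "\<forall>n. s n \<in> S \<and> rless r (s n) (s (Suc n))"
    using dependent_nat_choice[of "\<lambda>_ x. x \<in> S" "\<lambda>_. rless r"] by blast
  then show ?thesis using that monotone_rless_if_Suc[OF wo] by blast
qed

section \<open>Ranks and order patterns\<close>

definition rank_in :: "'a::linorder set \<Rightarrow> 'a \<Rightarrow> nat" where
  "rank_in B v = card {u \<in> B. u < v}"

definition is_initial_segment :: "'a::linorder set \<Rightarrow> 'a set \<Rightarrow> bool" where
  "is_initial_segment B X \<longleftrightarrow> B \<subseteq> X \<and> (\<forall>x\<in>X - B. \<forall>y\<in>B. y < x)"

lemma rank_in_strict_mono: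
  assumes "finite B" "w \<in> B" "w < v"
  shows "rank_in B w < rank_in B v"
  unfolding rank_in_def by (rule psubset_card_mono) (use assms in auto)

lemma inj_on_rank_in: "finite B \<Longrightarrow> inj_on (rank_in B) B"
  by (rule inj_onI) (metis rank_in_strict_mono less_irrefl linorder_neqE)

lemma rank_in_less_card:
  assumes "finite B" "v \<in> B"
  shows "rank_in B v < card B"
  unfolding rank_in_def by (rule psubset_card_mono) (use assms in auto)

lemma rank_in_image:
  assumes "finite B"
  shows "rank_in B ` B = {..<card B}"
proof (rule card_subset_eq)
  show "rank_in B ` B \<subseteq> {..<card B}" using rank_in_less_card[OF assms] by auto
  show "card (rank_in B ` B) = card {..<card B}"
    using card_image[OF inj_on_rank_in[OF assms]] by simp
qed simp

lemma rank_in_initial_segment: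
  assumes "is_initial_segment B X" "v \<in> B"
  shows "rank_in X v = rank_in B v"
proof -
  have "{u \<in> X. u < v} = {u \<in> B. u < v}"
    using assms unfolding is_initial_segment_def by (auto dest: less_asym)
  then show ?thesis unfolding rank_in_def by simp
qed

lemma rank_in_strict_mono_on:
  fixes \<psi> :: "'a::linorder \<Rightarrow> 'b::linorder"
  assumes mono: "strict_mono_on B \<psi>" and v: "v \<in> B"
  shows "rank_in (\<psi> ` B) (\<psi> v) = rank_in B v"
proof -
  have "{u \<in> \<psi> ` B. u < \<psi> v} = \<psi> ` {u \<in> B. u < v}"
    using strict_mono_on_less[OF mono _ v] by auto
  moreover have "inj_on \<psi> {u \<in> B. u < v}"
    using strict_mono_on_imp_inj_on[OF mono] by (rule inj_on_subset) blast
  ultimately show ?thesis unfolding rank_in_def by (simp add: card_image)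
qed

lemma obtain_end_extension:
  fixes F :: "nat set"
  assumes "finite F" "card F \<le> n"
  obtains X where "finite X" "card X = n" "is_initial_segment F X"
proof -
  define b where "b = Suc (Max (insert 0 F))"
  have below: "\<forall>y\<in>F. y < b" unfolding b_def using assms(1) by (simp add: le_imp_less_Suc)
  define X where "X = F \<union> {b..<b + (n - card F)}"
  have "F \<inter> {b..<b + (n - card F)} = {}" using below by fastforce
  then have "card X = card F + (n - card F)"
    unfolding X_def using card_Un_disjoint[OF assms(1)] by simp
  then have "card X = n" using assms(2) by simp
  moreover have "is_initial_segment F X"
    using below unfolding X_def is_initial_segment_def by fastforce
  ultimately show ?thesis using that assms(1) unfolding X_def by blast
qed

definition rank_vector :: "'a::linorder list \<Rightarrow> nat list" where
  "rank_vector xs = map (rank_in (set xs)) xs"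

lemma rank_vector_in_tuples:
  assumes "length xs = k"
  shows "rank_vector xs \<in> tuples {..<k} k"
proof -
  have "rank_in (set xs) v < k" if "v \<in> set xs" for v
    using rank_in_less_card[OF finite_set that] card_length[of xs] assms by linarith
  then show ?thesis using assms unfolding rank_vector_def tuples_def by auto
qed

lemma rank_vector_map_strict_mono:
  assumes "strict_mono_on (set xs) \<psi>"
  shows "rank_vector (map \<psi> xs) = rank_vector xs"
proof -
  have "rank_in (\<psi> ` set xs) (\<psi> v) = rank_in (set xs) v" if "v \<in> set xs" for v
    using rank_in_strict_mono_on[OF assms that] .
  then show ?thesis unfolding rank_vector_def by simp
qed

lemma order_pattern_map_strict_mono:
  assumes "strict_mono_on (set xs) \<psi>" "length xs = k"
  shows "order_pattern k (map \<psi> xs) = order_pattern k xs"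
  using assms strict_mono_on_less[OF assms(1)] unfolding order_pattern_def by auto

lemma order_pattern_eq_obtain_strict_mono:
  assumes xs: "length xs = k" and ys: "length ys = k"
    and pat: "order_pattern k xs = order_pattern k ys"
  obtains \<psi> where "strict_mono_on (set xs) \<psi>" "map \<psi> xs = ys"
proof -
  have less: "xs ! i < xs ! j \<longleftrightarrow> ys ! i < ys ! j" if "i < k" "j < k" for i j
  proof -
    have "(i, j) \<in> order_pattern k xs \<longleftrightarrow> (i, j) \<in> order_pattern k ys" using pat by simp
    then show ?thesis using that unfolding order_pattern_def by simp
  qed
  have eq: "xs ! i = xs ! j \<longleftrightarrow> ys ! i = ys ! j" if "i < k" "j < k" for i j
    using less[OF that] less[OF that(2,1)] by (metis linorder_neqE less_irrefl)
  define \<psi> where "\<psi> v = ys ! (SOME j. j < k \<and> xs ! j = v)" for v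
  have \<psi>: "\<psi> (xs ! j) = ys ! j" if "j < k" for j
  proof -
    have "(SOME i. i < k \<and> xs ! i = xs ! j) < k \<and> xs ! (SOME i. i < k \<and> xs ! i = xs ! j) = xs ! j"
      by (rule someI[of _ j]) (use that in simp)
    then show ?thesis unfolding \<psi>_def using eq that by blast
  qed
  have "strict_mono_on (set xs) \<psi>"
  proof (rule strict_mono_onI)
    fix u v assume "u \<in> set xs" "v \<in> set xs" "u < v"
    then obtain i j where "i < k" "j < k" "u = xs ! i" "v = xs ! j" "u < v"
      using xs by (auto simp: in_set_conv_nth)
    then show "\<psi> u < \<psi> v" using \<psi> less by simp
  qed
  moreover have "map \<psi> xs = ys" using xs ys \<psi> by (intro nth_equalityI) auto
  ultimately show ?thesis using that by blast
qed

lemma rank_vector_eq_if_order_pattern_eq: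
  assumes "length xs = k" "length ys = k" "order_pattern k xs = order_pattern k ys"
  shows "rank_vector xs = rank_vector ys"
proof -
  obtain \<psi> where "strict_mono_on (set xs) \<psi>" "map \<psi> xs = ys"
    using order_pattern_eq_obtain_strict_mono[OF assms] .
  then show ?thesis using rank_vector_map_strict_mono by metis
qed

section \<open>Homogeneous set functions\<close>

definition homogeneous :: "nat \<Rightarrow> ('a set \<Rightarrow> 'b) \<Rightarrow> 'a set \<Rightarrow> bool" where
  "homogeneous k G A \<longleftrightarrow> (\<forall>B\<in>Sk k A. \<forall>B'\<in>Sk k A. G B = G B')"

(* The index is chosen by SOME from the set of inhomogeneous indices, so it depends only on
   that set. *)
definition inhomogeneous_value :: "nat \<Rightarrow> 'm set \<Rightarrow> ('m \<Rightarrow> 'a set \<Rightarrow> 'b) \<Rightarrow> 'b \<Rightarrow> 'a set \<Rightarrow> 'b" where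
  "inhomogeneous_value k M G d A =
     (if \<exists>m\<in>M. \<not> homogeneous k (G m) A
      then G (SOME m. m \<in> M \<and> \<not> homogeneous k (G m) A) A else d)"

lemma homogeneous_image:
  assumes "inj s"
  shows "homogeneous k G (s ` X) \<longleftrightarrow> homogeneous k (\<lambda>B. G (s ` B)) X"
proof -
  have "Sk k (s ` X) = (`) s ` Sk k X"
    using assms unfolding Sk_def
    by (auto simp: subset_image_iff card_image inj_on_subset finite_image_iff image_iff)
  then show ?thesis unfolding homogeneous_def by simp
qed

lemma inhomogeneous_value_image:
  "inj s \<Longrightarrow> inhomogeneous_value k M G d (s ` X) =
    inhomogeneous_value k M (\<lambda>m B. G m (s ` B)) d X"
  unfolding inhomogeneous_value_def by (simp add: homogeneous_image)

lemma inhomogeneous_value_cases: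
  "inhomogeneous_value k M G d A = d \<or> (\<exists>m\<in>M. inhomogeneous_value k M G d A = G m A)"
proof (cases "\<exists>m\<in>M. \<not> homogeneous k (G m) A")
  case True
  then have "(SOME m. m \<in> M \<and> \<not> homogeneous k (G m) A) \<in> M"
    using someI_ex[of "\<lambda>m. m \<in> M \<and> \<not> homogeneous k (G m) A"] by blast
  then show ?thesis using True unfolding inhomogeneous_value_def by auto
qed (simp add: inhomogeneous_value_def)

lemma homogeneous_if_constant_on_end_extensions:
  fixes G :: "nat set \<Rightarrow> 'b"
  assumes const: "\<And>X. X \<in> Sk n UNIV \<Longrightarrow> G X = c"
    and initial: "\<And>X B. finite X \<Longrightarrow> is_initial_segment B X \<Longrightarrow> card B = k \<Longrightarrow> G X = G B"
    and "k \<le> n"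
  shows "homogeneous k G A"
proof -
  have "G B = c" if B: "B \<in> Sk k A" for B
  proof -
    obtain X where X: "finite X" "card X = n" "is_initial_segment B X"
      using obtain_end_extension[of B n] B \<open>k \<le> n\<close> unfolding Sk_def by auto
    then show ?thesis using const[of X] initial[OF X(1,3)] B unfolding Sk_def by auto
  qed
  then show ?thesis unfolding homogeneous_def by simp
qed

lemma homogeneous_UNIV_if_homogeneous_on_Sk:
  fixes G :: "nat set \<Rightarrow> 'b"
  assumes "\<And>X. X \<in> Sk (2 * k) UNIV \<Longrightarrow> homogeneous k G X"
  shows "homogeneous k G UNIV"
  unfolding homogeneous_def
proof (intro ballI)
  fix B B' :: "nat set" assume B: "B \<in> Sk k UNIV" "B' \<in> Sk k UNIV"
  then have "finite (B \<union> B')" "card (B \<union> B') \<le> 2 * k"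
    using card_Un_le[of B B'] unfolding Sk_def by auto
  then obtain X where "finite X" "card X = 2 * k" "B \<union> B' \<subseteq> X"
    using obtain_end_extension unfolding is_initial_segment_def by metis
  then have "X \<in> Sk (2 * k) UNIV" "B \<in> Sk k X" "B' \<in> Sk k X" using B unfolding Sk_def by auto
  then show "G B = G B'" using assms unfolding homogeneous_def by blast
qed

lemma homogeneous_if_inhomogeneous_value_constant:
  fixes G :: "'m \<Rightarrow> nat set \<Rightarrow> 'b"
  assumes const: "\<And>X. X \<in> Sk (2 * k) UNIV \<Longrightarrow> inhomogeneous_value k M G d X = c"
    and same: "\<And>X X'. X \<in> Sk (2 * k) UNIV \<Longrightarrow> X' \<in> Sk (2 * k) UNIV \<Longrightarrow>
      {m \<in> M. \<not> homogeneous k (G m) X} = {m \<in> M. \<not> homogeneous k (G m) X'}"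
    and initial: "\<And>m X B. finite X \<Longrightarrow> is_initial_segment B X \<Longrightarrow> card B = k \<Longrightarrow> m \<in> M \<Longrightarrow>
      G m X = G m B"
    and m: "m \<in> M"
  shows "homogeneous k (G m) UNIV"
proof -
  define T where "T = {m \<in> M. \<not> homogeneous k (G m) {..<2 * k}}"
  have "{..<2 * k} \<in> Sk (2 * k) UNIV" unfolding Sk_def by simp
  then have T: "{m \<in> M. \<not> homogeneous k (G m) X} = T" if "X \<in> Sk (2 * k) UNIV" for X
    using same that unfolding T_def by blast
  have "T = {}"
  proof (rule ccontr)
    assume "T \<noteq> {}"
    define m0 where "m0 = (SOME m. m \<in> T)"
    have m0: "m0 \<in> T" unfolding m0_def using \<open>T \<noteq> {}\<close> by (simp add: some_in_eq)
    have "G m0 X = c" if X: "X \<in> Sk (2 * k) UNIV" for X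
    proof -
      have "(\<lambda>m. m \<in> M \<and> \<not> homogeneous k (G m) X) = (\<lambda>m. m \<in> T)"
        using T[OF X] by blast
      moreover have "\<exists>m\<in>M. \<not> homogeneous k (G m) X" using T[OF X] \<open>T \<noteq> {}\<close> by blast
      ultimately have "inhomogeneous_value k M G d X = G m0 X"
        unfolding inhomogeneous_value_def m0_def by simp
      then show ?thesis using const X by simp
    qed
    then have "homogeneous k (G m0) {..<2 * k}"
      using homogeneous_if_constant_on_end_extensions[of "2 * k" "G m0" c k] initial m0
      unfolding T_def by fastforce
    then show False using m0 unfolding T_def by blast
  qed
  then show ?thesis using homogeneous_UNIV_if_homogeneous_on_Sk T m by blast
qed

section \<open>Coordinate functions of a completion\<close>

lemma finite_tuples: "finite X \<Longrightarrow> finite (tuples X k)"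
  using finite_lists_length_eq[of X k] unfolding tuples_def by (simp add: conj_commute)

lemma tuples_image: "tuples (\<psi> ` X) k = map \<psi> ` tuples X k"
proof
  show "map \<psi> ` tuples X k \<subseteq> tuples (\<psi> ` X) k"
    unfolding tuples_def by force
  show "tuples (\<psi> ` X) k \<subseteq> map \<psi> ` tuples X k"
  proof
    fix x assume x: "x \<in> tuples (\<psi> ` X) k"
    then have "x \<in> lists (\<psi> ` X)" unfolding tuples_def by (simp add: lists_eq_set)
    then obtain n where "n \<in> lists X" "x = map \<psi> n" by (auto simp: lists_image)
    then show "x \<in> map \<psi> ` tuples X k"
      using x unfolding tuples_def by (auto simp: lists_eq_set)
  qed
qed

definition wo_nth :: "'a rel \<Rightarrow> 'a set \<Rightarrow> nat \<Rightarrow> 'a" where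
  "wo_nth r A j = (THE a. a \<in> A \<and> card {b \<in> A. rless r b a} = j)"

definition rbelow :: "'a rel \<Rightarrow> 'a set \<Rightarrow> 'a set \<Rightarrow> bool" where
  "rbelow r Y X \<longleftrightarrow> (\<forall>y\<in>Y. \<forall>x\<in>X. rless r y x)"

lemma wo_nth_image:
  fixes s :: "nat \<Rightarrow> 'a"
  assumes wo: "Well_order r" and s: "monotone (<) (rless r) s" and B: "finite B" "v \<in> B"
  shows "wo_nth r (s ` B) (rank_in B v) = s v"
proof -
  have count: "card {b \<in> s ` B. rless r b (s w)} = rank_in B w" for w
  proof -
    have "{b \<in> s ` B. rless r b (s w)} = s ` {u \<in> B. u < w}"
      using monotone_rless_iff[OF wo s] by auto
    then show ?thesis
      unfolding rank_in_def
      using monotone_rless_inj[OF wo s] by (simp add: card_image inj_on_subset)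
  qed
  show ?thesis
    unfolding wo_nth_def
    by (rule the_equality) (use B count inj_on_rank_in[OF B(1)] in \<open>auto dest: inj_onD\<close>)
qed

lemma wo_nth_initial_segment:
  fixes s :: "nat \<Rightarrow> 'a"
  assumes wo: "Well_order r" and s: "monotone (<) (rless r) s"
    and X: "finite X" and seg: "is_initial_segment B X" and j: "j < card B"
  shows "wo_nth r (s ` X) j = wo_nth r (s ` B) j"
proof -
  have B: "finite B" "B \<subseteq> X" using X seg finite_subset unfolding is_initial_segment_def by auto
  have "j \<in> rank_in B ` B" using rank_in_image[OF B(1)] j by simp
  then obtain v where v: "v \<in> B" "j = rank_in B v" by blast
  then have "j = rank_in X v" using rank_in_initial_segment[OF seg v(1)] by simp
  then have "wo_nth r (s ` X) j = s v" using wo_nth_image[OF wo s X] v(1) B(2) by blast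
  moreover have "wo_nth r (s ` B) j = s v" using wo_nth_image[OF wo s B(1) v(1)] v(2) by simp
  ultimately show ?thesis by simp
qed

lemma rbelow_initial_segment:
  fixes s :: "nat \<Rightarrow> 'a"
  assumes wo: "Well_order r" and s: "monotone (<) (rless r) s"
    and seg: "is_initial_segment B X" and ne: "B \<noteq> {}"
  shows "rbelow r Y (s ` X) \<longleftrightarrow> rbelow r Y (s ` B)"
proof
  assume below: "rbelow r Y (s ` B)"
  obtain b where b: "b \<in> B" using ne by blast
  have "rless r (s b) (s x)" if "x \<in> X - B" for x
    using seg b that monotoneD[OF s] unfolding is_initial_segment_def by blast
  then show "rbelow r Y (s ` X)"
    using below b rless_trans[OF wo] unfolding rbelow_def by blast
qed (use seg in \<open>auto simp: rbelow_def is_initial_segment_def\<close>)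

definition coord_indices :: "nat \<Rightarrow> (nat list \<times> nat) set" where
  "coord_indices k = tuples {..<k} k \<times> {..<k}"

(* m = (z, i): read a k-tuple off A along the rank vector z, take the i-th coordinate of f. *)
definition coord :: "nat \<Rightarrow> 'a rel \<Rightarrow> ('a list \<Rightarrow> 'a list) \<Rightarrow> nat list \<times> nat \<Rightarrow> 'a set \<Rightarrow> 'a" where
  "coord k r f m A =
     (let x = map (wo_nth r A) (fst m)
      in if x \<in> tuples (Field r) k \<and> rbelow r (set (f x)) A then f x ! snd m
         else rmin r (Field r))"

lemma finite_coord_indices: "finite (coord_indices k)"
  unfolding coord_indices_def by (simp add: finite_tuples)

lemma coord_below_or_least:
  assumes wo: "Well_order r" and ft: "\<forall>x\<in>tuples (Field r) k. f x \<in> tuples (Field r) k"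
    and A: "A \<subseteq> Field r" "A \<noteq> {}" and i: "snd m < k"
  shows "coord k r f m A \<in> Field r \<and>
    (rless r (coord k r f m A) (rmin r A) \<or> coord k r f m A = rmin r (Field r))"
proof -
  define x where "x = map (wo_nth r A) (fst m)"
  show ?thesis
  proof (cases "x \<in> tuples (Field r) k \<and> rbelow r (set (f x)) A")
    case True
    then have "f x \<in> tuples (Field r) k" using ft by blast
    then have "f x ! snd m \<in> set (f x)" "set (f x) \<subseteq> Field r"
      using i unfolding tuples_def by auto
    moreover have "rmin r A \<in> A" using rmin_in[OF wo A] .
    moreover have "coord k r f m A = f x ! snd m"
      using True unfolding coord_def x_def Let_def by simp
    ultimately show ?thesis using True unfolding rbelow_def by auto
  next
    case False
    then have "coord k r f m A = rmin r (Field r)"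
      unfolding coord_def x_def Let_def by auto
    then show ?thesis using rmin_in[OF wo] A by auto
  qed
qed

lemma coord_initial_segment:
  fixes s :: "nat \<Rightarrow> 'a"
  assumes wo: "Well_order r" and s: "monotone (<) (rless r) s" and k: "k > 0"
    and X: "finite X" and seg: "is_initial_segment B X" and B: "card B = k"
    and m: "m \<in> coord_indices k"
  shows "coord k r f m (s ` X) = coord k r f m (s ` B)"
proof -
  have "map (wo_nth r (s ` X)) (fst m) = map (wo_nth r (s ` B)) (fst m)"
    using m wo_nth_initial_segment[OF wo s X seg] B
    unfolding coord_indices_def tuples_def by (auto intro: map_cong)
  moreover have "B \<noteq> {}" using B k by auto
  ultimately show ?thesis
    unfolding coord_def Let_def using rbelow_initial_segment[OF wo s seg] by presburger
qed

lemma coord_rank_vector: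
  fixes s :: "nat \<Rightarrow> 'a" and xs :: "nat list"
  assumes wo: "Well_order r" and s: "monotone (<) (rless r) s"
    and xs: "length xs = k" "k > 0" and below: "rbelow r (set (f (map s xs))) (s ` set xs)"
  obtains B where "B \<in> Sk k UNIV" "\<And>i. coord k r f (rank_vector xs, i) (s ` B) = f (map s xs) ! i"
proof -
  have card: "card (set xs) \<le> k" using xs card_length by metis
  obtain B where B: "finite B" "card B = k" and seg: "is_initial_segment (set xs) B"
    using obtain_end_extension[OF _ card] by blast
  have "wo_nth r (s ` B) (rank_in (set xs) v) = s v" if v: "v \<in> set xs" for v
  proof -
    have "v \<in> B" "rank_in (set xs) v = rank_in B v"
      using seg v rank_in_initial_segment[OF seg v] unfolding is_initial_segment_def by auto
    then show ?thesis using wo_nth_image[OF wo s B(1)] by simp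
  qed
  then have "map (wo_nth r (s ` B)) (rank_vector xs) = map s xs"
    unfolding rank_vector_def by simp
  moreover have "map s xs \<in> tuples (Field r) k"
    using xs monotone_rless_Field[OF s] unfolding tuples_def by auto
  moreover have "rbelow r (set (f (map s xs))) (s ` B)"
    using below rbelow_initial_segment[OF wo s seg] xs by auto
  ultimately have "coord k r f (rank_vector xs, i) (s ` B) = f (map s xs) ! i" for i
    unfolding coord_def by simp
  then show ?thesis using that B unfolding Sk_def by blast
qed

lemma coord_homogeneous_pattern_determined:
  fixes s :: "nat \<Rightarrow> 'a"
  assumes wo: "Well_order r" and k: "k > 0" and s: "monotone (<) (rless r) s"
    and ft: "\<forall>x\<in>tuples (Field r) k. f x \<in> tuples (Field r) k"
    and hom: "\<forall>m\<in>coord_indices k. homogeneous k (\<lambda>B. coord k r f m (s ` B)) UNIV"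
    and xs: "length xs = k" and ys: "length ys = k"
    and pat: "order_pattern k xs = order_pattern k ys"
    and below_xs: "rbelow r (set (f (map s xs))) (s ` set xs)"
    and below_ys: "rbelow r (set (f (map s ys))) (s ` set ys)"
  shows "f (map s xs) = f (map s ys)"
proof -
  obtain B where B: "B \<in> Sk k UNIV"
    and fx: "\<And>i. coord k r f (rank_vector xs, i) (s ` B) = f (map s xs) ! i"
    using coord_rank_vector[where f = f, OF wo s xs k below_xs] by blast
  obtain B' where B': "B' \<in> Sk k UNIV"
    and fy: "\<And>i. coord k r f (rank_vector ys, i) (s ` B') = f (map s ys) ! i"
    using coord_rank_vector[where f = f, OF wo s ys k below_ys] by blast
  have same: "rank_vector xs = rank_vector ys"
    using rank_vector_eq_if_order_pattern_eq[OF xs ys pat] .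
  have "map s xs \<in> tuples (Field r) k" "map s ys \<in> tuples (Field r) k"
    using xs ys monotone_rless_Field[OF s] unfolding tuples_def by auto
  then have len: "length (f (map s xs)) = k" "length (f (map s ys)) = k"
    using ft unfolding tuples_def by auto
  have "f (map s xs) ! i = f (map s ys) ! i" if "i < k" for i
  proof -
    have "(rank_vector xs, i) \<in> coord_indices k"
      using rank_vector_in_tuples[OF xs] that unfolding coord_indices_def by simp
    then show ?thesis
      using hom B B' fx fy same unfolding homogeneous_def by metis
  qed
  then show ?thesis using len by (simp add: nth_equalityI)
qed

section \<open>Ineffability and Ramsey's theorem\<close>

lemma regressive_if_below_or_least:
  assumes "Well_order r" "L > 0"
    and "\<forall>A\<in>Sk L (Field r). F A \<in> Field r \<and> (rless r (F A) (rmin r A) \<or> F A = rmin r (Field r))"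
  shows "regressive L r F"
  unfolding regressive_def
proof
  fix A assume A: "A \<in> Sk L (Field r)"
  then have "A \<subseteq> Field r" "A \<noteq> {}" using assms(2) unfolding Sk_def by auto
  then have "(rmin r (Field r), rmin r A) \<in> r"
    using rmin_in[OF assms(1)] rmin_least[OF assms(1)] by blast
  then show "F A \<in> Field r \<and> (rless r (F A) (rmin r A) \<or> rmin r A = rmin r (Field r))"
    using assms(3) A unfolding rless_def by auto
qed

lemma regressive_inhomogeneous_coord:
  assumes wo: "Well_order r" and ft: "\<forall>x\<in>tuples (Field r) k. f x \<in> tuples (Field r) k"
    and L: "L > 0"
  shows "regressive L r (inhomogeneous_value k (coord_indices k) (coord k r f) (rmin r (Field r)))"
    (is "regressive L r ?F")
proof (rule regressive_if_below_or_least[OF wo L], intro ballI)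
  fix A assume "A \<in> Sk L (Field r)"
  then have A: "A \<subseteq> Field r" "A \<noteq> {}" using L unfolding Sk_def by auto
  have "\<forall>m\<in>coord_indices k. coord k r f m A \<in> Field r \<and>
    (rless r (coord k r f m A) (rmin r A) \<or> coord k r f m A = rmin r (Field r))"
    using coord_below_or_least[OF wo ft A] unfolding coord_indices_def by auto
  moreover have "rmin r (Field r) \<in> Field r" using rmin_in[OF wo] A by blast
  ultimately show "?F A \<in> Field r \<and> (rless r (?F A) (rmin r A) \<or> ?F A = rmin r (Field r))"
    using inhomogeneous_value_cases[of k "coord_indices k" "coord k r f" "rmin r (Field r)" A]
    by metis
qed

lemma ineffable'_obtain_constant_seq:
  assumes ine: "ineffable' L r" and reg: "regressive L r F"
  obtains s :: "nat \<Rightarrow> 'a" and c where "monotone (<) (rless r) s" "\<forall>X\<in>Sk L UNIV. F (s ` X) = c"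
proof -
  have co: "card_order_on (Field r) r" and inf: "infinite (Field r)"
    using ine unfolding ineffable'_def by blast+
  obtain S c where S: "stationary r S" and c: "\<forall>A\<in>Sk L S. F A = c"
    using ine reg unfolding ineffable'_def by blast
  obtain s :: "nat \<Rightarrow> 'a" where s: "monotone (<) (rless r) s" "range s \<subseteq> S"
    using stationary_obtain_monotone_seq[OF co inf S] by blast
  have "inj s" using monotone_rless_inj[OF card_order_on_well_order_on[OF co] s(1)] .
  then have "s ` X \<in> Sk L S" if "X \<in> Sk L UNIV" for X
    using that s(2) unfolding Sk_def by (auto simp: card_image inj_on_subset)
  then show ?thesis using that s(1) c by blast
qed

lemma Sk_eq_nsets: "Sk k X = [X]\<^bsup>k\<^esup>"
  unfolding Sk_def nsets_def by blast

lemma ramsey_obtain_strict_mono: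
  fixes F :: "nat set \<Rightarrow> 'b"
  assumes V: "finite V" and F: "\<forall>X\<in>Sk L UNIV. F X \<in> V"
  obtains g :: "nat \<Rightarrow> nat"
  where "strict_mono g" "\<forall>X\<in>Sk L UNIV. \<forall>X'\<in>Sk L UNIV. F (g ` X) = F (g ` X')"
proof -
  obtain h where h: "bij_betw h V {..<card V}"
    using ex_bij_betw_finite_nat[OF V] atLeast0LessThan by metis
  have "F ` [UNIV]\<^bsup>L\<^esup> \<subseteq> V" using F unfolding Sk_eq_nsets by blast
  then have "(h \<circ> F) ` [UNIV]\<^bsup>L\<^esup> \<subseteq> {..<card V}"
    using bij_betw_imp_surj_on[OF h] by (metis image_comp image_mono)
  then obtain Y t where Y: "infinite Y" "(h \<circ> F) ` [Y]\<^bsup>L\<^esup> \<subseteq> {t}"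
    using Ramsey_nsets[OF infinite_UNIV_nat] by metis
  define g where "g = enumerate Y"
  have g: "strict_mono g" "range g = Y"
    using strict_mono_enumerate[OF Y(1)] range_enumerate[OF Y(1)] unfolding g_def by auto
  have gX: "g ` X \<in> [Y]\<^bsup>L\<^esup>" if "X \<in> Sk L UNIV" for X
    using that g strict_mono_imp_inj_on[OF g(1)]
    unfolding Sk_eq_nsets nsets_def by (auto simp: card_image inj_on_subset)
  then have "h (F (g ` X)) = t \<and> F (g ` X) \<in> V" if "X \<in> Sk L UNIV" for X
    using Y(2) F gX[OF that] nsets_mono[of Y UNIV L]
    unfolding Sk_eq_nsets by (auto simp: image_subset_iff)
  then have "\<forall>X\<in>Sk L UNIV. \<forall>X'\<in>Sk L UNIV. F (g ` X) = F (g ` X')"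
    using bij_betw_imp_inj_on[OF h] by (metis inj_on_def)
  then show ?thesis using that g(1) by blast
qed

lemma ineffable'_obtain_seq:
  fixes Col :: "'a set \<Rightarrow> 'c"
  assumes ine: "ineffable' L r" and reg: "regressive L r F"
    and V: "finite V" and Col: "\<And>A. Col A \<in> V"
  obtains s :: "nat \<Rightarrow> 'a" and c where "monotone (<) (rless r) s"
    "\<And>X. X \<in> Sk L UNIV \<Longrightarrow> F (s ` X) = c"
    "\<And>X X'. X \<in> Sk L UNIV \<Longrightarrow> X' \<in> Sk L UNIV \<Longrightarrow> Col (s ` X) = Col (s ` X')"
proof -
  obtain s :: "nat \<Rightarrow> 'a" and c where s: "monotone (<) (rless r) s"
    and c: "\<forall>X\<in>Sk L UNIV. F (s ` X) = c"
    using ineffable'_obtain_constant_seq[OF ine reg] by blast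
  obtain g :: "nat \<Rightarrow> nat" where g: "strict_mono g"
    and ramsey: "\<forall>X\<in>Sk L UNIV. \<forall>X'\<in>Sk L UNIV. Col (s ` g ` X) = Col (s ` g ` X')"
    using ramsey_obtain_strict_mono[where F = "\<lambda>X. Col (s ` X)", OF V] Col by blast
  have "monotone (<) (rless r) (s \<circ> g)"
    by (rule monotoneI) (simp add: monotoneD[OF s] strict_monoD[OF g])
  moreover have "g ` X \<in> Sk L UNIV" if "X \<in> Sk L UNIV" for X
    using strict_mono_imp_inj_on[OF g] that unfolding Sk_def by (auto simp: card_image inj_on_subset)
  ultimately show ?thesis
    using that[of "s \<circ> g" c] c ramsey unfolding image_comp[symmetric] by blast
qed

lemma ineffable'_obtain_coord_homogeneous_seq:
  assumes ine: "ineffable' (2 * k) r" and k: "k > 0"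
    and ft: "\<forall>x\<in>tuples (Field r) k. f x \<in> tuples (Field r) k"
  obtains s :: "nat \<Rightarrow> 'a" where "monotone (<) (rless r) s"
    "\<forall>m\<in>coord_indices k. homogeneous k (\<lambda>B. coord k r f m (s ` B)) UNIV"
proof -
  have wo: "Well_order r"
    using ine card_order_on_well_order_on unfolding ineffable'_def by blast
  let ?M = "coord_indices k" and ?d = "rmin r (Field r)"
  have "regressive (2 * k) r (inhomogeneous_value k ?M (coord k r f) ?d)"
    using regressive_inhomogeneous_coord[OF wo ft] k by simp
  then obtain s :: "nat \<Rightarrow> 'a" and c where s: "monotone (<) (rless r) s"
    and c: "\<And>X. X \<in> Sk (2 * k) UNIV \<Longrightarrow> inhomogeneous_value k ?M (coord k r f) ?d (s ` X) = c"
    and col: "\<And>X X'. X \<in> Sk (2 * k) UNIV \<Longrightarrow> X' \<in> Sk (2 * k) UNIV \<Longrightarrow>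
      {m \<in> ?M. \<not> homogeneous k (coord k r f m) (s ` X)} =
      {m \<in> ?M. \<not> homogeneous k (coord k r f m) (s ` X')}"
    using ineffable'_obtain_seq[OF ine _ finite_Pow_iff[THEN iffD2, OF finite_coord_indices],
        of _ "\<lambda>A. {m \<in> ?M. \<not> homogeneous k (coord k r f m) A}"]
    by blast
  have inj: "inj s" using monotone_rless_inj[OF wo s] .
  have const: "inhomogeneous_value k ?M (\<lambda>m B. coord k r f m (s ` B)) ?d X = c"
    if "X \<in> Sk (2 * k) UNIV" for X
    using c[OF that] by (simp add: inhomogeneous_value_image[OF inj])
  have same: "{m \<in> ?M. \<not> homogeneous k (\<lambda>B. coord k r f m (s ` B)) X} =
      {m \<in> ?M. \<not> homogeneous k (\<lambda>B. coord k r f m (s ` B)) X'}"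
    if "X \<in> Sk (2 * k) UNIV" "X' \<in> Sk (2 * k) UNIV" for X X'
    using col[OF that] by (simp add: homogeneous_image[OF inj])
  show ?thesis
    using that s homogeneous_if_inhomogeneous_value_constant[OF const same
        coord_initial_segment[OF wo s k]]
    by blast
qed

section \<open>Transfer to the function assignment\<close>

lemma set_subset_fld_graph_on:
  assumes "x \<in> C"
  shows "set x \<union> set (f x) \<subseteq> fld (graph_on C f)"
proof -
  have "(x, f x) \<in> graph_on C f" using assms unfolding graph_on_def by blast
  then show ?thesis unfolding fld_def by blast
qed

lemma order_iso_obtain_map:
  assumes "order_iso r C f A h"
  obtains \<phi> where "\<forall>x\<in>C. map \<phi> x \<in> A \<and> h (map \<phi> x) = map \<phi> (f x)"
    "\<forall>a\<in>fld (graph_on C f). \<forall>b\<in>fld (graph_on C f). rless r a b \<longleftrightarrow> \<phi> a < \<phi> b"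
proof -
  obtain \<phi> where \<phi>: "\<forall>a\<in>fld (graph_on C f). \<forall>b\<in>fld (graph_on C f). rless r a b \<longleftrightarrow> \<phi> a < \<phi> b"
    and graph: "(\<lambda>(x, y). (map \<phi> x, map \<phi> y)) ` graph_on C f = graph_on A h"
    using assms unfolding order_iso_def rless_def by blast
  have "(map \<phi> x, map \<phi> (f x)) \<in> graph_on A h" if "x \<in> C" for x
    using graph that unfolding graph_on_def by force
  then have "\<forall>x\<in>C. map \<phi> x \<in> A \<and> h (map \<phi> x) = map \<phi> (f x)"
    unfolding graph_on_def by auto
  then show ?thesis using that \<phi> by blast
qed

lemma Max_map_less_Min_map_iff:
  assumes \<phi>: "\<forall>a\<in>X. \<forall>b\<in>X. rless r a b \<longleftrightarrow> \<phi> a < (\<phi> b :: nat)"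
    and "set ys \<subseteq> X" "set xs \<subseteq> X" "ys \<noteq> []" "xs \<noteq> []"
  shows "Max (set (map \<phi> ys)) < Min (set (map \<phi> xs)) \<longleftrightarrow> rbelow r (set ys) (set xs)"
  using assms by (auto simp: Max_less_iff Min_gr_iff rbelow_def subset_iff)

lemma card_regvals_le_ot:
  assumes "\<forall>x\<in>tuples E k. \<forall>y\<in>tuples E k. order_pattern k x = order_pattern k y \<longrightarrow>
    Max (set (F x)) < Min (set x) \<longrightarrow> Max (set (F y)) < Min (set y) \<longrightarrow> F x = F y"
  shows "card (regvals F (tuples E k)) \<le> ot k"
proof -
  define R where "R = {x \<in> tuples E k. Max (set (F x)) < Min (set x)}"
  define pick where "pick P = (SOME x. x \<in> R \<and> order_pattern k x = P)" for P
  have "F x = F (pick (order_pattern k x))" if "x \<in> R" for x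
    using assms someI[of "\<lambda>y. y \<in> R \<and> order_pattern k y = order_pattern k x" x] that
    unfolding R_def pick_def by auto
  then have "regvals F (tuples E k) \<subseteq> (F \<circ> pick) ` order_pattern k ` R"
    unfolding regvals_def R_def by auto
  moreover have finite: "finite (order_pattern k ` tuples UNIV k)"
    by (rule finite_subset[of _ "Pow ({..<k} \<times> {..<k})"]) (auto simp: order_pattern_def)
  moreover have "order_pattern k ` R \<subseteq> order_pattern k ` tuples UNIV k"
    unfolding R_def tuples_def by auto
  ultimately have "card (regvals F (tuples E k)) \<le> card (order_pattern k ` tuples UNIV k)"
    by (meson card_image_le card_mono finite_imageI finite_subset order_trans)
  then show ?thesis unfolding ot_def .
qed

lemma completion_obtain_copy:
  fixes s :: "nat \<Rightarrow> 'a"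
  assumes k: "k > 0" and s: "monotone (<) (rless r) s"
    and comp: "completion k U (Field r) r f"
  obtains A \<phi> where "finite A" "A \<subseteq> tuples UNIV k" "strict_mono_on {..<p} (\<phi> \<circ> s)"
    "\<And>n. n \<in> tuples {..<p} k \<Longrightarrow> map (\<phi> \<circ> s) n \<in> A \<and>
      U A (map (\<phi> \<circ> s) n) = map \<phi> (f (map s n)) \<and>
      (Max (set (U A (map (\<phi> \<circ> s) n))) < Min (set (map (\<phi> \<circ> s) n)) \<longleftrightarrow>
       rbelow r (set (f (map s n))) (s ` set n))"
proof -
  have ft: "\<forall>x\<in>tuples (Field r) k. f x \<in> tuples (Field r) k"
    using comp unfolding completion_def by blast
  have "finite (tuples (s ` {..<p}) k)" "tuples (s ` {..<p}) k \<subseteq> tuples (Field r) k"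
    using finite_tuples monotone_rless_Field[OF s] unfolding tuples_def by auto
  then obtain C A where C: "tuples (s ` {..<p}) k \<subseteq> C" "C \<subseteq> tuples (Field r) k"
    and A: "finite A" "A \<subseteq> tuples UNIV k" and iso: "order_iso r C f A (U A)"
    using comp unfolding completion_def by meson
  obtain \<phi> where \<phi>C: "\<forall>x\<in>C. map \<phi> x \<in> A \<and> U A (map \<phi> x) = map \<phi> (f x)"
    and \<phi>: "\<forall>a\<in>fld (graph_on C f). \<forall>b\<in>fld (graph_on C f). rless r a b \<longleftrightarrow> \<phi> a < \<phi> b"
    using order_iso_obtain_map[OF iso] by blast
  have nC: "map s n \<in> C" if "n \<in> tuples {..<p} k" for n
    using C(1) that tuples_image[of s "{..<p}" k] by blast
  \<comment> \<open>k > 0 makes every s a (a < p) a coordinate of a tuple in C\<close>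
  have s_fld: "s a \<in> fld (graph_on C f)" if "a < p" for a
    using set_subset_fld_graph_on[OF nC[of "replicate k a"]] that k unfolding tuples_def by auto
  have "strict_mono_on {..<p} (\<phi> \<circ> s)"
  proof (rule strict_mono_onI)
    fix a b assume ab: "a \<in> {..<p}" "b \<in> {..<p}" "a < b"
    have "rless r (s a) (s b)" using monotoneD[OF s ab(3)] .
    then show "(\<phi> \<circ> s) a < (\<phi> \<circ> s) b" using \<phi> s_fld ab by simp
  qed
  moreover have "Max (set (U A (map (\<phi> \<circ> s) n))) < Min (set (map (\<phi> \<circ> s) n)) \<longleftrightarrow>
      rbelow r (set (f (map s n))) (s ` set n)" if n: "n \<in> tuples {..<p} k" for n
  proof -
    have "length n = k" "length (f (map s n)) = k"
      using n ft C(2) nC[OF n] unfolding tuples_def by auto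
    have "set (f (map s n)) \<subseteq> fld (graph_on C f)" "set (map s n) \<subseteq> fld (graph_on C f)"
      using set_subset_fld_graph_on[of "map s n" C f] nC[OF n] by auto
    moreover have "f (map s n) \<noteq> []" "map s n \<noteq> []" using \<open>length n = k\<close> k
      \<open>length (f (map s n)) = k\<close> by auto
    ultimately have "Max (set (map \<phi> (f (map s n)))) < Min (set (map \<phi> (map s n))) \<longleftrightarrow>
        rbelow r (set (f (map s n))) (set (map s n))"
      by (rule Max_map_less_Min_map_iff[OF \<phi>])
    then show ?thesis using bspec[OF \<phi>C nC[OF n]] by simp
  qed
  moreover have "map (\<phi> \<circ> s) n \<in> A \<and> U A (map (\<phi> \<circ> s) n) = map \<phi> (f (map s n))"
    if "n \<in> tuples {..<p} k" for n
    using bspec[OF \<phi>C nC[OF that]] by simp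
  ultimately show ?thesis using that A by blast
qed

lemma completion_regvals_le_ot:
  fixes s :: "nat \<Rightarrow> 'a"
  assumes k: "k > 0" and s: "monotone (<) (rless r) s"
    and comp: "completion k U (Field r) r f"
    and determined: "\<And>xs ys. length xs = k \<Longrightarrow> length ys = k \<Longrightarrow>
      order_pattern k xs = order_pattern k ys \<Longrightarrow>
      rbelow r (set (f (map s xs))) (s ` set xs) \<Longrightarrow> rbelow r (set (f (map s ys))) (s ` set ys) \<Longrightarrow>
      f (map s xs) = f (map s ys)"
  shows "\<exists>A E. finite A \<and> A \<subseteq> tuples UNIV k \<and> finite E \<and> card E = p \<and>
    tuples E k \<subseteq> A \<and> card (regvals (U A) (tuples E k)) \<le> ot k"
proof -
  obtain A \<phi> where A: "finite A" "A \<subseteq> tuples UNIV k" and \<psi>: "strict_mono_on {..<p} (\<phi> \<circ> s)"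
    and copy: "\<And>n. n \<in> tuples {..<p} k \<Longrightarrow> map (\<phi> \<circ> s) n \<in> A \<and>
      U A (map (\<phi> \<circ> s) n) = map \<phi> (f (map s n)) \<and>
      (Max (set (U A (map (\<phi> \<circ> s) n))) < Min (set (map (\<phi> \<circ> s) n)) \<longleftrightarrow>
       rbelow r (set (f (map s n))) (s ` set n))"
    using completion_obtain_copy[OF k s comp] by blast
  define E where "E = (\<phi> \<circ> s) ` {..<p}"
  have E: "finite E" "card E = p"
    unfolding E_def using card_image[OF strict_mono_on_imp_inj_on[OF \<psi>]] by auto
  have tuples_E: "tuples E k = map (\<phi> \<circ> s) ` tuples {..<p} k"
    unfolding E_def by (rule tuples_image)
  have pattern: "order_pattern k (map (\<phi> \<circ> s) n) = order_pattern k n"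
    if "n \<in> tuples {..<p} k" for n
    using that monotone_on_subset[OF \<psi>] order_pattern_map_strict_mono unfolding tuples_def by auto
  have "U A x = U A y"
    if xy: "x \<in> tuples E k" "y \<in> tuples E k" and pat: "order_pattern k x = order_pattern k y"
      and below: "Max (set (U A x)) < Min (set x)" "Max (set (U A y)) < Min (set y)" for x y
  proof -
    obtain n n' where n: "n \<in> tuples {..<p} k" "x = map (\<phi> \<circ> s) n"
      and n': "n' \<in> tuples {..<p} k" "y = map (\<phi> \<circ> s) n'"
      using xy unfolding tuples_E by blast
    have "f (map s n) = f (map s n')"
    proof (rule determined)
      show "length n = k" "length n' = k" using n(1) n'(1) by (auto simp: tuples_def)
      show "order_pattern k n = order_pattern k n'" using pat pattern n n' by simp
      show "rbelow r (set (f (map s n))) (s ` set n)"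
        using below(1) copy[OF n(1)] unfolding n(2) by blast
      show "rbelow r (set (f (map s n'))) (s ` set n')"
        using below(2) copy[OF n'(1)] unfolding n'(2) by blast
    qed
    then show ?thesis using copy[OF n(1)] copy[OF n'(1)] n(2) n'(2) by simp
  qed
  then have "card (regvals (U A) (tuples E k)) \<le> ot k"
    by (intro card_regvals_le_ot) blast
  moreover have "tuples E k \<subseteq> A" using tuples_E copy by auto
  ultimately show ?thesis using A E by blast
qed

theorem theorem4p11:
  fixes U :: "nat list set \<Rightarrow> nat list \<Rightarrow> nat list" and k p :: nat
  assumes "\<forall>j>0. \<exists>r :: 'a rel. ineffable' j r"
    and "k > 0" and "p > 0"
    and "function_assignment k U"
    and "ordinal_completion_property TYPE('a) k U"
  shows "\<exists>A E. finite A \<and> A \<subseteq> tuples UNIV k \<and> finite E \<and> card E = p \<and>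
               tuples E k \<subseteq> A \<and> card (regvals (U A) (tuples E k)) \<le> ot k"
proof -
  have "2 * k > 0" using assms(2) by simp
  then obtain r :: "'a rel" where ine: "ineffable' (2 * k) r" using assms(1) by blast
  have wo: "Well_order r" using ine card_order_on_well_order_on unfolding ineffable'_def by blast
  obtain f where comp: "completion k U (Field r) r f"
    using assms(5) wo unfolding ordinal_completion_property_def by blast
  have ft: "\<forall>x\<in>tuples (Field r) k. f x \<in> tuples (Field r) k"
    using comp unfolding completion_def by blast
  obtain s :: "nat \<Rightarrow> 'a" where s: "monotone (<) (rless r) s"
    and hom: "\<forall>m\<in>coord_indices k. homogeneous k (\<lambda>B. coord k r f m (s ` B)) UNIV"
    using ineffable'_obtain_coord_homogeneous_seq[OF ine assms(2) ft] by blast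
  show ?thesis
    using completion_regvals_le_ot[OF assms(2) s comp]
      coord_homogeneous_pattern_determined[OF wo assms(2) s ft hom] by blast
qed

end
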